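(* Consider the factorized (COM) cost model described in the context, applied to the join phase that follows a full semijoin reduction. In that phase every non-root node $i$ has match probability $m_i=1$ (and fanout $fo_i\ge 1$). Then all valid join orders of the instance have the same cost; that is, the cost is independent of the join order.
   Context: **Instance.** An instance consists of the following data. - A rooted tree $\mathcal{J}$ whose root $r$ is the driver relation (here, already fully reduced) and whose non-root nodes are join operators. - A number $N>0$, the driver cardinality. - For each non-root node $i$: a match probability $m_i\in[0,1]$, a fanout $fo_i\ge1$ (a real number), and a per-probe cost $c_i>0$. By convention $m_r=1$. **Valid join orders.** A valid join order is a sequence listing every non-root node exactly once, such that each node whose parent is not $r$ appears after its parent. **Survival probability.** Let $T$ be a connected set of nodes with top node $v$ (that is, $T$ contains $v$ and, for each of its members other than $v$, also that member's parent). Define recursively $$m_T=m_v\Big(1-\big(1-\prod_u m_{T_u}\big)^{fo_v}\Big).$$ The product ranges over the children $u$ of $v$ in $T$, and $T_u$ is the set of nodes of $T$ in the subtree rooted at $u$. An empty product equals $1$. **Number of probes.** Suppose node $l$ is placed when the set of already placed nodes is $S$, where $S$ contains $r$ and the earlier non-root nodes. Let $r=a_0,\dots,a_k$ be the proper ancestors of $l$, listed from the root down to its parent. Let $T(u,S)$ be the set of nodes of $S$ in the subtree rooted at $u$. Then $$\mathrm{probes}(l,S)=N\prod_{j=1}^{k}m_{a_j}fo_{a_j}\times\prod_{j=0}^{k}\prod_{u}m_{T(u,S)}.$$ Here the inner product is over the children $u$ of $a_j$ with $u\in S$ and $u\notin\{a_{j+1},l\}$. **Cost of an order.** The cost of a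 valid order $\sigma$ is $\sum_l c_l\,\mathrm{probes}(l,S_l)$, where $S_l$ is the set consisting of $r$ and the nodes preceding $l$ in $\sigma$. *)

theory Defs
  imports Complex_Main
begin

text \<open>A rooted join tree: the root r, the finite set V of non-root nodes
  (the join operators), and the parent function par.\<close>

inductive anc_eq :: "'a set \<Rightarrow> ('a \<Rightarrow> 'a) \<Rightarrow> 'a \<Rightarrow> 'a \<Rightarrow> bool"
  for V :: "'a set" and par :: "'a \<Rightarrow> 'a" where
  refl: "anc_eq V par a a"
| step: "w \<in> V \<Longrightarrow> anc_eq V par a (par w) \<Longrightarrow> anc_eq V par a w"

definition is_join_tree :: "'a \<Rightarrow> 'a set \<Rightarrow> ('a \<Rightarrow> 'a) \<Rightarrow> bool" where
  "is_join_tree r V par \<longleftrightarrow> finite V \<and> r \<notin> V \<and>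
     (\<forall>v\<in>V. par v \<in> insert r V) \<and> (\<forall>v\<in>V. anc_eq V par r v)"

definition children :: "'a set \<Rightarrow> ('a \<Rightarrow> 'a) \<Rightarrow> 'a \<Rightarrow> 'a set" where
  "children V par u = {w \<in> V. par w = u}"

text \<open>Survival probability m_T of a connected set T with top node v,
  computed by the recursion
  m_T = m_v (1 - (1 - prod_u m_{T_u})^{fo_v}), where u ranges over the
  children of v in T.  The recursion is unfolded with a fuel parameter; with
  fuel at least the height of the tree (card V + 1 suffices) it is the exact
  recursive value (at a leaf of T the empty product is 1).\<close>
fun surv_fuel :: "nat \<Rightarrow> 'a set \<Rightarrow> ('a \<Rightarrow> 'a) \<Rightarrow> ('a \<Rightarrow> real) \<Rightarrow> ('a \<Rightarrow> real)
                   \<Rightarrow> 'a set \<Rightarrow> 'a \<Rightarrow> real" where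
  "surv_fuel 0 V par m fo T v = m v"
| "surv_fuel (Suc n) V par m fo T v =
     m v * (1 - (1 - (\<Prod>u \<in> children V par v \<inter> T. surv_fuel n V par m fo T u)) powr fo v)"

definition surv :: "'a set \<Rightarrow> ('a \<Rightarrow> 'a) \<Rightarrow> ('a \<Rightarrow> real) \<Rightarrow> ('a \<Rightarrow> real)
                   \<Rightarrow> 'a set \<Rightarrow> 'a \<Rightarrow> real" where
  "surv V par m fo T v = surv_fuel (Suc (card V)) V par m fo T v"

definition subtree_part :: "'a set \<Rightarrow> ('a \<Rightarrow> 'a) \<Rightarrow> 'a \<Rightarrow> 'a set \<Rightarrow> 'a set" where
  "subtree_part V par u S = {w \<in> S. anc_eq V par u w}"

text \<open>Proper ancestors of l (a_0 = r, ..., a_k = parent of l).\<close>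
definition proper_anc :: "'a set \<Rightarrow> ('a \<Rightarrow> 'a) \<Rightarrow> 'a \<Rightarrow> 'a set" where
  "proper_anc V par l = {a. anc_eq V par a l \<and> a \<noteq> l}"

text \<open>Number of probes of node l placed when S (containing r) is already placed.
  The children u of a_j excluded are a_{j+1} and l, i.e. exactly the children of
  a_j that are ancestors-or-self of l.\<close>
definition probes :: "'a \<Rightarrow> 'a set \<Rightarrow> ('a \<Rightarrow> 'a) \<Rightarrow> real \<Rightarrow> ('a \<Rightarrow> real) \<Rightarrow> ('a \<Rightarrow> real)
                      \<Rightarrow> 'a \<Rightarrow> 'a set \<Rightarrow> real" where
  "probes r V par N m fo l S =
     N * (\<Prod>a \<in> proper_anc V par l - {r}. m a * fo a) *
     (\<Prod>a \<in> proper_anc V par l.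
        \<Prod>u \<in> {u \<in> children V par a. u \<in> S \<and> u \<notin> {a'. anc_eq V par a' l}}.
          surv V par m fo (subtree_part V par u S) u)"

definition valid_order :: "'a \<Rightarrow> 'a set \<Rightarrow> ('a \<Rightarrow> 'a) \<Rightarrow> 'a list \<Rightarrow> bool" where
  "valid_order r V par \<sigma> \<longleftrightarrow> distinct \<sigma> \<and> set \<sigma> = V \<and>
     (\<forall>i < length \<sigma>. par (\<sigma> ! i) \<noteq> r \<longrightarrow> par (\<sigma> ! i) \<in> set (take i \<sigma>))"

definition order_cost :: "'a \<Rightarrow> 'a set \<Rightarrow> ('a \<Rightarrow> 'a) \<Rightarrow> real \<Rightarrow> ('a \<Rightarrow> real) \<Rightarrow> ('a \<Rightarrow> real)
                      \<Rightarrow> ('a \<Rightarrow> real) \<Rightarrow> 'a list \<Rightarrow> real" where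
  "order_cost r V par N m fo c \<sigma> =
     (\<Sum>i < length \<sigma>. c (\<sigma> ! i) * probes r V par N m fo (\<sigma> ! i) (insert r (set (take i \<sigma>))))"

end

theory Submission
  imports Defs
begin

text \<open>After a full semijoin reduction every node matches with certainty, so every survival
  probability \<open>m\<^sub>T = 1 \<cdot> (1 - (1 - 1)\<^bsup>fo\<^esup>)\<close> collapses to 1 by induction on the height of \<open>T\<close>.
  The number of probes of a node then depends only on its chain of ancestors and not on the
  set of nodes placed before it, so the cost of an order is a sum over the nodes and does
  not depend on the order.\<close>

text \<open>No bound on the fanout is needed: Isabelle's \<open>0 powr a = 0\<close> holds for every \<open>a\<close>.\<close>
lemma surv_fuel_eq_1:
  assumes "\<forall>i\<in>V. m i = 1" and "v \<in> V"
  shows "surv_fuel n V par m fo T v = 1"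
  using assms(2)
proof (induction n arbitrary: v)
  case 0
  then show ?case using assms(1) by simp
next
  case (Suc n)
  have "(\<Prod>u \<in> children V par v \<inter> T. surv_fuel n V par m fo T u) = 1"
    by (rule prod.neutral) (auto simp: children_def Suc.IH)
  then show ?case using assms(1) Suc.prems by simp
qed

lemma surv_eq_1:
  assumes "\<forall>i\<in>V. m i = 1" and "v \<in> V"
  shows "surv V par m fo T v = 1"
  unfolding surv_def using assms by (rule surv_fuel_eq_1)

lemma probes_eq_if_match_1:
  assumes "\<forall>i\<in>V. m i = 1"
  shows "probes r V par N m fo l S = N * (\<Prod>a \<in> proper_anc V par l - {r}. m a * fo a)"
proof -
  have "(\<Prod>a \<in> proper_anc V par l.
          \<Prod>u \<in> {u \<in> children V par a. u \<in> S \<and> u \<notin> {a'. anc_eq V par a' l}}.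
            surv V par m fo (subtree_part V par u S) u) = 1"
    by (intro prod.neutral ballI) (auto simp: children_def surv_eq_1[OF assms])
  then show ?thesis unfolding probes_def by simp
qed

lemma order_cost_eq_sum_if_probes_const:
  assumes "distinct \<sigma>" and "set \<sigma> = V"
    and "\<And>l S. probes r V par N m fo l S = p l"
  shows "order_cost r V par N m fo c \<sigma> = (\<Sum>l\<in>V. c l * p l)"
proof -
  have "order_cost r V par N m fo c \<sigma> = (\<Sum>i < length \<sigma>. c (\<sigma> ! i) * p (\<sigma> ! i))"
    unfolding order_cost_def assms(3) ..
  also have "\<dots> = sum_list (map (\<lambda>l. c l * p l) \<sigma>)"
    by (simp add: sum_list_sum_nth atLeast0LessThan)
  also have "\<dots> = (\<Sum>l\<in>V. c l * p l)"
    using assms(1,2) by (simp add: sum_list_distinct_conv_sum_set)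
  finally show ?thesis .
qed

theorem theorem3p5:
  fixes r :: 'a and V :: "'a set" and par :: "'a \<Rightarrow> 'a"
    and N :: real and m fo c :: "'a \<Rightarrow> real"
  assumes tree: "is_join_tree r V par"
    and N_pos: "N > 0"
    and m_root: "m r = 1"
    and m_one: "\<forall>i\<in>V. m i = 1"
    and fo_ge: "\<forall>i\<in>V. fo i \<ge> 1"
    and c_pos: "\<forall>i\<in>V. c i > 0"
    and v1: "valid_order r V par \<sigma>1"
    and v2: "valid_order r V par \<sigma>2"
  shows "order_cost r V par N m fo c \<sigma>1 = order_cost r V par N m fo c \<sigma>2"
proof -
  define p where "p l = N * (\<Prod>a \<in> proper_anc V par l - {r}. m a * fo a)" for l
  have probes_const: "probes r V par N m fo l S = p l" for l S
    unfolding p_def using m_one by (rule probes_eq_if_match_1)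
  have "order_cost r V par N m fo c \<sigma> = (\<Sum>l\<in>V. c l * p l)"
    if "valid_order r V par \<sigma>" for \<sigma>
    using that probes_const
    by (intro order_cost_eq_sum_if_probes_const) (auto simp: valid_order_def)
  then show ?thesis using v1 v2 by simp
qed

end
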